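(* Let $q$ be a prime power, let $\mathbb{F}=\mathrm{GF}(q^2)$, and let $H\subseteq \mathbb{F}^\ast$ be the subgroup of order $q+1$. Let $G=G(q^2,q+1)$ be the simple graph whose vertex set is $(\mathbb{F}\times\mathbb{F}\setminus\{(0,0)\})/\sim$, where $(a_1,b_1)\sim(a_2,b_2)$ iff there is $h\in H$ with $a_1=ha_2$ and $b_1=hb_2$, and in which two distinct vertices $\langle a,b\rangle$ and $\langle x,y\rangle$ are adjacent iff $ax+by\in H$. If $q$ is odd then $|E(G)|=\frac{1}{2}(q^5-q^4+q^3-2q^2+1)$. If $q=2^k$ then $|E(G)|=\frac{1}{2}(q^5-q^4+q^3-2q^2)$.
   Context: $\langle a,b\rangle$ denotes the equivalence class of the pair $(a,b)$; adjacency does not depend on the representatives. Loops are not edges: a vertex $\langle x,y\rangle$ with $x^2+y^2\in H$ is not adjacent to itself. *)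

theory Defs
  imports "HOL-Computational_Algebra.Primes" "HOL-Library.Cardinality"
begin

definition scal_rel :: "'a::field set \<Rightarrow> (('a \<times> 'a) \<times> ('a \<times> 'a)) set" where
  "scal_rel H = {((a1,b1),(a2,b2)). (a1,b1) \<noteq> (0,0) \<and> (a2,b2) \<noteq> (0,0) \<and>
      (\<exists>h\<in>H. a1 = h * a2 \<and> b1 = h * b2)}"

definition G_vertices :: "'a::field set \<Rightarrow> ('a \<times> 'a) set set" where
  "G_vertices H = (UNIV - {(0,0)}) // scal_rel H"

text \<open>Adjacency of classes via representatives (independent of representatives).\<close>
definition G_adj :: "'a::field set \<Rightarrow> ('a \<times> 'a) set \<Rightarrow> ('a \<times> 'a) set \<Rightarrow> bool" where
  "G_adj H u v = (u \<noteq> v \<and> (\<exists>(a,b)\<in>u. \<exists>(x,y)\<in>v. a * x + b * y \<in> H))"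

definition G_edges :: "'a::field set \<Rightarrow> ('a \<times> 'a) set set set" where
  "G_edges H = {{u, v} | u v. u \<in> G_vertices H \<and> v \<in> G_vertices H \<and> G_adj H u v}"

end

theory Submission
  imports Defs
begin

(* Double counting. Each H-class has q + 1 points and, for (a, b) <> (0, 0), every line
   a x + b y = h has q^2 points, so every vertex is joined to exactly q^2 vertices when loops
   are counted. Hence 2 |E| + L = |V| q^2 with (q + 1) |V| = q^4 - 1, where L counts the
   vertices <x, y> with x^2 + y^2 in H, and (q + 1) L is the number of points on the conics
   x^2 + y^2 = h, h in H. In characteristic 2 squaring is an additive bijection, so each conic
   has q^2 points. For odd q, q^2 = 1 mod 4 makes -1 = i^2 a square, and
   x^2 + y^2 = (x + i y)(x - i y) turns each conic into a hyperbola with q^2 - 1 points. *)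

lemma card_eq_mult_card_image:
  assumes "finite A" and "\<And>y. y \<in> f ` A \<Longrightarrow> card {x\<in>A. f x = y} = k"
  shows "card A = k * card (f ` A)"
proof -
  have "card A = (\<Sum>y\<in>f ` A. card {x\<in>A. f x = y})"
    using sum.group[OF assms(1) finite_imageI[OF assms(1)] subset_refl, where g = f and h = "\<lambda>_. 1::nat"]
    by simp
  also have "\<dots> = k * card (f ` A)"
    using assms(2) by simp
  finally show ?thesis .
qed

lemma even_card_involution:
  assumes "finite A" and "\<And>x. x \<in> A \<Longrightarrow> f x \<in> A \<and> f x \<noteq> x \<and> f (f x) = x"
  shows "even (card A)"
proof -
  have "card {x\<in>A. {x, f x} = e} = 2" if e: "e \<in> (\<lambda>x. {x, f x}) ` A" for e
  proof -
    obtain y where y: "y \<in> A" "e = {y, f y}" using e by auto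
    have "{x\<in>A. {x, f x} = e} = {y, f y}"
      using y assms(2) by (auto simp: doubleton_eq_iff)
    then show ?thesis using assms(2)[OF y(1)] by auto
  qed
  then have "card A = 2 * card ((\<lambda>x. {x, f x}) ` A)"
    by (rule card_eq_mult_card_image[OF assms(1)])
  then show ?thesis by simp
qed

lemma even_card_iff_even_card_fixpoints:
  assumes "finite A" and "\<And>x. x \<in> A \<Longrightarrow> f x \<in> A \<and> f (f x) = x"
  shows "even (card A) \<longleftrightarrow> even (card {x\<in>A. f x = x})"
proof -
  have "even (card {x\<in>A. f x \<noteq> x})"
    by (rule even_card_involution[of _ f]) (use assms in auto)
  moreover have "card A = card {x\<in>A. f x = x} + card {x\<in>A. f x \<noteq> x}"
    using assms(1) by (subst card_Un_disjoint[symmetric]) (auto intro: arg_cong[where f = card])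
  ultimately show ?thesis by simp
qed

lemma two_le_of_card_eq_square:
  assumes "CARD('a::{finite,field}) = q\<^sup>2"
  shows "2 \<le> q"
proof -
  have "card {0, 1::'a} \<le> CARD('a)"
    by (rule card_mono) auto
  then have "1\<^sup>2 < q\<^sup>2"
    using assms by simp
  then show ?thesis
    using power_less_imp_less_base by fastforce
qed

lemma two_eq_zero_iff_even_card:
  "(2::'a::{finite,field}) = 0 \<longleftrightarrow> even CARD('a)"
proof
  assume two: "(2::'a) = 0"
  have "x + 1 + 1 = x" for x :: 'a
    by (simp add: add.assoc two)
  then show "even CARD('a)"
    using even_card_iff_even_card_fixpoints[of UNIV "\<lambda>x::'a. x + 1"] by simp
next
  assume even: "even CARD('a)"
  show "(2::'a) = 0"
  proof (rule ccontr)
    assume two: "(2::'a) \<noteq> 0"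
    have "- x = x \<longleftrightarrow> x = 0" for x :: 'a
      using two by (simp add: eq_neg_iff_add_eq_0 flip: mult_2)
    then have "{x::'a. - x = x} = {0}" by auto
    then have "even CARD('a) \<longleftrightarrow> even (card {0::'a})"
      using even_card_iff_even_card_fixpoints[of "UNIV :: 'a set" uminus] by simp
    with even show False by simp
  qed
qed

(* Inversion is an involution on the (CARD('a) - 1) / 2 nonzero squares, an even number of
   them; its fixed points are the squares among 1 and -1, so -1 must be one. *)
lemma exists_sqrt_minus_one:
  assumes two: "(2::'a::{finite,field}) \<noteq> 0" and four: "4 dvd CARD('a) - 1"
  shows "\<exists>i::'a. i\<^sup>2 = - 1"
proof (rule ccontr)
  assume no_sqrt: "\<nexists>i::'a. i\<^sup>2 = - 1"
  define S where "S = power2 ` (UNIV - {0::'a})"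
  have neg: "y \<noteq> - y" if "y \<noteq> 0" for y :: 'a
    using two that by (simp add: eq_neg_iff_add_eq_0 flip: mult_2)
  have "card (UNIV - {0::'a}) = 2 * card S"
    unfolding S_def
  proof (rule card_eq_mult_card_image)
    fix s assume "s \<in> power2 ` (UNIV - {0::'a})"
    then obtain y where y: "y \<noteq> 0" "s = y\<^sup>2" by auto
    then have "{x \<in> UNIV - {0}. x\<^sup>2 = s} = {y, - y}"
      by (auto simp: power2_eq_iff)
    then show "card {x \<in> UNIV - {0}. x\<^sup>2 = s} = 2"
      using neg[OF y(1)] by simp
  qed simp
  then have "even (card S)"
    using four by (simp add: card_Diff_singleton)
  moreover have "inverse s \<in> S" if "s \<in> S" for s
  proof -
    obtain y where "y \<noteq> 0" "s = y\<^sup>2" using \<open>s \<in> S\<close> by (auto simp: S_def)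
    then show ?thesis
      unfolding S_def by (intro image_eqI[of _ _ "inverse y"]) (auto simp: power_inverse)
  qed
  then have "even (card S) \<longleftrightarrow> even (card {s\<in>S. inverse s = s})"
    by (intro even_card_iff_even_card_fixpoints) (auto simp: S_def)
  moreover have "{s\<in>S. inverse s = s} = {1}"
  proof -
    have "s = 1" if "s \<in> S" "inverse s = s" for s
    proof -
      obtain y where y: "y \<noteq> 0" "s = y\<^sup>2" using \<open>s \<in> S\<close> by (auto simp: S_def)
      then have "s\<^sup>2 = 1\<^sup>2"
        using \<open>inverse s = s\<close> by (metis power2_eq_square power_one right_inverse power_not_zero)
      then have "s = 1 \<or> s = - 1"
        by (simp only: power2_eq_iff)
      then show "s = 1"
        using no_sqrt y(2) by metis
    qed
    moreover have "1 \<in> S"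
      unfolding S_def by (rule image_eqI[of _ _ 1]) auto
    ultimately show ?thesis by auto
  qed
  ultimately show False by simp
qed

lemma card_sum_two_squares_char_two:
  assumes two: "(2::'a::{finite,field}) = 0"
  shows "card {(a, b::'a). a\<^sup>2 + b\<^sup>2 = c} = CARD('a)"
proof -
  have frobenius: "(a + b)\<^sup>2 = a\<^sup>2 + b\<^sup>2" for a b :: 'a
    using two by (simp add: power2_sum)
  have "inj (power2 :: 'a \<Rightarrow> 'a)"
    using two by (intro injI) (auto simp: power2_eq_iff mult_2 add_eq_0_iff)
  then have "surj (power2 :: 'a \<Rightarrow> 'a)"
    by (simp add: finite_UNIV_inj_surj)
  then obtain s :: 'a where s: "s\<^sup>2 = c"
    by (metis surjD)
  have "a\<^sup>2 + b\<^sup>2 = c \<longleftrightarrow> a + b = s" for a b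
    using \<open>inj power2\<close> by (metis frobenius s injD)
  then have "{(a, b). a\<^sup>2 + b\<^sup>2 = c} = (\<lambda>a. (a, s - a)) ` UNIV"
    by (auto simp: algebra_simps)
  also have "card \<dots> = CARD('a)"
    by (rule card_image) (auto simp: inj_on_def)
  finally show ?thesis .
qed

lemma card_hyperbola:
  assumes "(c::'a::{finite,field}) \<noteq> 0"
  shows "card {(u, v::'a). u * v = c} = CARD('a) - 1"
proof -
  have "{(u, v). u * v = c} = (\<lambda>u. (u, c / u)) ` (UNIV - {0})"
    using assms by (auto simp: field_simps)
  also have "card \<dots> = CARD('a) - 1"
    by (subst card_image) (auto simp: inj_on_def card_Diff_singleton)
  finally show ?thesis .
qed

lemma card_sum_two_squares:
  assumes two: "(2::'a::{finite,field}) \<noteq> 0" and i: "i\<^sup>2 = (- 1::'a)" and c: "c \<noteq> 0"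
  shows "card {(a, b::'a). a\<^sup>2 + b\<^sup>2 = c} = CARD('a) - 1"
proof -
  define L where "L = (\<lambda>(a, b). (a + i * b, a - i * b))"
  have "i \<noteq> 0" using i by auto
  have "inj L"
  proof (rule injI)
    fix p p' assume eq: "L p = L p'"
    obtain a b a' b' where p: "p = (a, b)" "p' = (a', b')"
      by (cases p, cases p')
    have recover: "2 * x = (x + i * y) + (x - i * y)" "2 * i * y = (x + i * y) - (x - i * y)" for x y
      by (simp_all add: algebra_simps mult_2)
    have "a + i * b = a' + i * b'" "a - i * b = a' - i * b'"
      using eq by (simp_all add: L_def p)
    then have "2 * a = 2 * a'" "2 * i * b = 2 * i * b'"
      by (metis recover(1), metis recover(2))
    then show "p = p'"
      using two \<open>i \<noteq> 0\<close> p by simp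
  qed
  have "(a + i * b) * (a - i * b) = a\<^sup>2 + b\<^sup>2" for a b
  proof -
    have "(a + i * b) * (a - i * b) = a\<^sup>2 - i\<^sup>2 * b\<^sup>2"
      by (simp add: algebra_simps power2_eq_square)
    then show ?thesis using i by simp
  qed
  then have "{(a, b). a\<^sup>2 + b\<^sup>2 = c} = L -` {(u, v). u * v = c}"
    by (auto simp: L_def)
  also have "card \<dots> = card {(u, v::'a). u * v = c}"
    using \<open>inj L\<close> finite_UNIV_inj_surj[of L] by (intro card_vimage_inj) auto
  finally show ?thesis
    using card_hyperbola[OF c] by simp
qed

lemma card_line:
  assumes "(a, b) \<noteq> (0::'a::{finite,field}, 0::'a)"
  shows "card {(x, y::'a). a * x + b * y = c} = CARD('a)"
proof (cases "a = 0")
  case True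
  then have "{(x, y). a * x + b * y = c} = (\<lambda>x. (x, c / b)) ` UNIV"
    using assms by (auto simp: field_simps)
  then show ?thesis
    by (simp add: card_image inj_on_def)
next
  case False
  then have "{(x, y). a * x + b * y = c} = (\<lambda>y. ((c - b * y) / a, y)) ` UNIV"
    by (auto simp: field_simps)
  then show ?thesis
    by (simp add: card_image inj_on_def)
qed

lemma handshake:
  assumes "finite V" and "\<And>u v. R u v \<Longrightarrow> R v u" and "\<And>u. \<not> R u u"
  shows "card (Sigma V (\<lambda>u. {v\<in>V. R u v})) = 2 * card {{u, v} | u v. u \<in> V \<and> v \<in> V \<and> R u v}"
proof -
  let ?D = "Sigma V (\<lambda>u. {v\<in>V. R u v})"
  let ?edge = "\<lambda>(u, v). {u, v}"
  have "card {d\<in>?D. ?edge d = e} = 2" if "e \<in> ?edge ` ?D" for e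
  proof -
    obtain u v where uv: "u \<in> V" "v \<in> V" "R u v" "e = {u, v}"
      using \<open>e \<in> ?edge ` ?D\<close> by auto
    then have "{d\<in>?D. ?edge d = e} = {(u, v), (v, u)}"
      using assms(2) by (auto simp: doubleton_eq_iff)
    moreover have "u \<noteq> v"
      using uv(3) assms(3) by metis
    ultimately show ?thesis by simp
  qed
  then have "card ?D = 2 * card (?edge ` ?D)"
    using assms(1) by (intro card_eq_mult_card_image) auto
  also have "?edge ` ?D = {{u, v} | u v. u \<in> V \<and> v \<in> V \<and> R u v}"
    by auto
  finally show ?thesis .
qed

definition G_link :: "'a::field set \<Rightarrow> ('a \<times> 'a) set \<Rightarrow> ('a \<times> 'a) set \<Rightarrow> bool" where
  "G_link H u v \<longleftrightarrow> (\<exists>(a, b)\<in>u. \<exists>(x, y)\<in>v. a * x + b * y \<in> H)"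

lemma G_adj_iff: "G_adj H u v \<longleftrightarrow> u \<noteq> v \<and> G_link H u v"
  by (simp add: G_adj_def G_link_def)

lemma G_link_commute: "G_link H u v \<longleftrightarrow> G_link H v u"
  unfolding G_link_def by (rule iffI; fastforce simp: mult.commute)

locale multiplicative_subgroup =
  fixes H :: "'a::{finite,field} set"
  assumes zero_not_in: "0 \<notin> H"
    and one_in: "1 \<in> H"
    and mult_closed: "x \<in> H \<Longrightarrow> y \<in> H \<Longrightarrow> x * y \<in> H"
    and inverse_closed: "x \<in> H \<Longrightarrow> inverse x \<in> H"
begin

lemma in_H_nonzero: "h \<in> H \<Longrightarrow> h \<noteq> 0"
  using zero_not_in by auto

lemma in_scal_rel_iff:
  "(p, (a, b)) \<in> scal_rel H \<longleftrightarrow> (a, b) \<noteq> (0, 0) \<and> p \<in> (\<lambda>h. (h * a, h * b)) ` H"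
  using in_H_nonzero by (cases p) (auto simp: scal_rel_def)

lemma scal_rel_class:
  assumes "(a, b) \<noteq> (0, 0)"
  shows "scal_rel H `` {(a, b)} = (\<lambda>h. (h * a, h * b)) ` H"
proof (intro equalityI subsetI)
  fix p assume "p \<in> scal_rel H `` {(a, b)}"
  then obtain x y h where p: "p = (x, y)" "h \<in> H" "a = h * x" "b = h * y"
    by (cases p) (auto simp: in_scal_rel_iff)
  then have "p = (inverse h * a, inverse h * b)"
    using in_H_nonzero by auto
  then show "p \<in> (\<lambda>h. (h * a, h * b)) ` H"
    using inverse_closed[OF p(2)] by blast
next
  fix p assume "p \<in> (\<lambda>h. (h * a, h * b)) ` H"
  then obtain h where h: "h \<in> H" "p = (h * a, h * b)" by auto
  then have "(a, b) = (inverse h * fst p, inverse h * snd p)" "p \<noteq> (0, 0)"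
    using in_H_nonzero assms by auto
  then show "p \<in> scal_rel H `` {(a, b)}"
    using inverse_closed[OF h(1)] by (cases p) (auto simp: in_scal_rel_iff)
qed

lemma equiv_scal_rel: "equiv (UNIV - {(0, 0)}) (scal_rel H)"
proof (rule equivI)
  show "scal_rel H \<subseteq> (UNIV - {(0, 0)}) \<times> (UNIV - {(0, 0)})"
    by (auto simp: scal_rel_def)
  show "refl_on (UNIV - {(0, 0)}) (scal_rel H)"
    using one_in by (auto simp: refl_on_def scal_rel_def)
  show "sym (scal_rel H)"
  proof (rule symI)
    fix p q assume "(p, q) \<in> scal_rel H"
    moreover obtain a b where "q = (a, b)" by (cases q)
    ultimately show "(q, p) \<in> scal_rel H"
      using scal_rel_class by (auto simp: in_scal_rel_iff)
  qed
  show "trans (scal_rel H)"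
  proof (rule transI)
    fix p q r assume "(p, q) \<in> scal_rel H" "(q, r) \<in> scal_rel H"
    then show "(p, r) \<in> scal_rel H"
      using mult_closed by (cases q, cases r) (auto simp: in_scal_rel_iff mult.assoc)
  qed
qed

lemma card_scal_rel_class:
  assumes "(a, b) \<noteq> (0, 0)"
  shows "card (scal_rel H `` {(a, b)}) = card H"
proof -
  have "inj_on (\<lambda>h. (h * a, h * b)) H"
    using assms by (auto simp: inj_on_def)
  then show ?thesis
    by (simp add: scal_rel_class[OF assms] card_image)
qed

lemma G_link_classes_iff:
  assumes "(a, b) \<noteq> (0, 0)" and "(x, y) \<noteq> (0, 0)"
  shows "G_link H (scal_rel H `` {(a, b)}) (scal_rel H `` {(x, y)}) \<longleftrightarrow> a * x + b * y \<in> H"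
proof -
  have scaled: "(g * a) * (g' * x) + (g * b) * (g' * y) \<in> H \<longleftrightarrow> a * x + b * y \<in> H"
    if "g \<in> H" "g' \<in> H" for g g'
  proof -
    have gg': "g * g' \<in> H" "inverse (g * g') \<in> H"
      using that mult_closed inverse_closed by auto
    have "(g * a) * (g' * x) + (g * b) * (g' * y) = (g * g') * (a * x + b * y)"
      by (simp add: algebra_simps)
    moreover have "a * x + b * y = inverse (g * g') * ((g * g') * (a * x + b * y))"
      using in_H_nonzero[OF gg'(1)] by (metis left_inverse mult.assoc mult_1_left)
    ultimately show ?thesis
      using gg' mult_closed by metis
  qed
  have "G_link H (scal_rel H `` {(a, b)}) (scal_rel H `` {(x, y)}) \<longleftrightarrow>
      (\<exists>g\<in>H. \<exists>g'\<in>H. (g * a) * (g' * x) + (g * b) * (g' * y) \<in> H)"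
    unfolding G_link_def scal_rel_class[OF assms(1)] scal_rel_class[OF assms(2)] by simp
  also have "\<dots> \<longleftrightarrow> a * x + b * y \<in> H"
    using scaled one_in by blast
  finally show ?thesis .
qed

lemma card_points_eq_mult_card_vertices:
  assumes "\<And>p. p \<noteq> (0, 0) \<Longrightarrow> Q (scal_rel H `` {p}) \<longleftrightarrow> P p"
  shows "card {p. p \<noteq> (0, 0) \<and> P p} = card H * card {u \<in> G_vertices H. Q u}"
proof -
  let ?U = "{u \<in> G_vertices H. Q u}"
  have classes: "u = scal_rel H `` {p}" if "u \<in> G_vertices H" "p \<in> u" for u p
    using that equiv_scal_rel by (auto simp: G_vertices_def quotient_def equiv_class_eq_iff)
  have "{p. p \<noteq> (0, 0) \<and> P p} = \<Union> ?U"
  proof (intro equalityI subsetI)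
    fix p assume p: "p \<in> {p. p \<noteq> (0, 0) \<and> P p}"
    then have "scal_rel H `` {p} \<in> ?U"
      using assms by (auto simp: G_vertices_def quotient_def)
    moreover have "p \<in> scal_rel H `` {p}"
      using p equiv_class_self[OF equiv_scal_rel] by simp
    ultimately show "p \<in> \<Union> ?U" by blast
  next
    fix p assume "p \<in> \<Union> ?U"
    then obtain u where u: "u \<in> G_vertices H" "Q u" "p \<in> u" by blast
    then have "p \<noteq> (0, 0)"
      using in_quotient_imp_subset[OF equiv_scal_rel] by (auto simp: G_vertices_def)
    moreover have "Q (scal_rel H `` {p})"
      using classes u by simp
    ultimately show "p \<in> {p. p \<noteq> (0, 0) \<and> P p}"
      using assms by simp
  qed
  also have "card (\<Union> ?U) = sum card ?U"
    using quotient_disj[OF equiv_scal_rel] by (intro card_Union_disjoint) (auto simp: pairwise_def disjnt_def G_vertices_def)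
  also have "\<dots> = sum (\<lambda>_. card H) ?U"
    using card_scal_rel_class by (intro sum.cong) (auto simp: G_vertices_def quotient_def)
  finally show ?thesis by simp
qed

lemma card_G_vertices: "card H * card (G_vertices H) = CARD('a)\<^sup>2 - 1"
proof -
  have "{p :: 'a \<times> 'a. p \<noteq> (0, 0) \<and> True} = UNIV - {(0, 0)}"
    by auto
  then have "card {p :: 'a \<times> 'a. p \<noteq> (0, 0) \<and> True} = CARD('a)\<^sup>2 - 1"
    by (simp add: card_Diff_singleton card_prod power2_eq_square)
  then show ?thesis
    using card_points_eq_mult_card_vertices[of "\<lambda>_. True" "\<lambda>_. True"] by simp
qed

lemma card_G_link_neighbours:
  assumes "v \<in> G_vertices H"
  shows "card {u \<in> G_vertices H. G_link H v u} = CARD('a)"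
proof -
  obtain a b where ab: "(a, b) \<noteq> (0, 0)" "v = scal_rel H `` {(a, b)}"
    using assms by (auto simp: G_vertices_def quotient_def)
  have "card H * card {u \<in> G_vertices H. G_link H v u}
      = card {p. p \<noteq> (0, 0) \<and> a * fst p + b * snd p \<in> H}"
    using ab G_link_classes_iff by (intro card_points_eq_mult_card_vertices[symmetric]) auto
  also have "{p. p \<noteq> (0, 0) \<and> a * fst p + b * snd p \<in> H} = (\<Union>c\<in>H. {(x, y). a * x + b * y = c})"
    using zero_not_in by auto
  also have "card \<dots> = (\<Sum>c\<in>H. card {(x, y). a * x + b * y = c})"
    by (rule card_UN_disjoint) auto
  also have "\<dots> = card H * CARD('a)"
    using card_line[OF ab(1)] by simp
  finally show ?thesis
    using one_in by auto
qed

lemma card_G_loops: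
  "card H * card {v \<in> G_vertices H. G_link H v v} = (\<Sum>c\<in>H. card {(a, b). a\<^sup>2 + b\<^sup>2 = c})"
proof -
  have "card H * card {v \<in> G_vertices H. G_link H v v}
      = card {p. p \<noteq> (0, 0) \<and> (fst p)\<^sup>2 + (snd p)\<^sup>2 \<in> H}"
    using G_link_classes_iff by (intro card_points_eq_mult_card_vertices[symmetric]) (auto simp: power2_eq_square)
  also have "{p. p \<noteq> (0, 0) \<and> (fst p)\<^sup>2 + (snd p)\<^sup>2 \<in> H} = (\<Union>c\<in>H. {(a, b). a\<^sup>2 + b\<^sup>2 = c})"
    using zero_not_in by auto
  also have "card \<dots> = (\<Sum>c\<in>H. card {(a, b). a\<^sup>2 + b\<^sup>2 = c})"
    by (rule card_UN_disjoint) auto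
  finally show ?thesis .
qed

lemma twice_card_G_edges_plus_loops:
  "2 * card (G_edges H) + card {v \<in> G_vertices H. G_link H v v} = card (G_vertices H) * CARD('a)"
proof -
  let ?V = "G_vertices H"
  have "card ?V * CARD('a) = card (Sigma ?V (\<lambda>v. {u\<in>?V. G_link H v u}))"
    using card_G_link_neighbours by simp
  also have "Sigma ?V (\<lambda>v. {u\<in>?V. G_link H v u})
      = Sigma ?V (\<lambda>v. {u\<in>?V. G_adj H v u}) \<union> (\<lambda>v. (v, v)) ` {v\<in>?V. G_link H v v}"
    by (auto simp: G_adj_iff)
  also have "card \<dots> = card (Sigma ?V (\<lambda>v. {u\<in>?V. G_adj H v u})) + card {v\<in>?V. G_link H v v}"
    by (subst card_Un_disjoint) (auto simp: G_adj_iff card_image inj_on_def)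
  also have "card (Sigma ?V (\<lambda>v. {u\<in>?V. G_adj H v u})) = 2 * card (G_edges H)"
    unfolding G_edges_def by (rule handshake) (auto simp: G_adj_iff G_link_commute)
  finally show ?thesis by simp
qed

lemma card_H_mult_twice_card_G_edges:
  "card H * (2 * card (G_edges H)) + (\<Sum>c\<in>H. card {(a, b). a\<^sup>2 + b\<^sup>2 = c})
    = (CARD('a)\<^sup>2 - 1) * CARD('a)"
  using arg_cong[OF twice_card_G_edges_plus_loops, of "(*) (card H)"]
  by (simp add: card_G_loops card_G_vertices add_mult_distrib2 mult.assoc flip: mult.assoc)

lemma twice_card_G_edges_eq:
  assumes "CARD('a) = q\<^sup>2" and "card H = q + 1"
    and "\<And>c. c \<in> H \<Longrightarrow> card {(a, b::'a). a\<^sup>2 + b\<^sup>2 = c} = T"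
  shows "2 * int (card (G_edges H)) = (int q - 1) * (int q ^ 2 + 1) * int q ^ 2 - int T"
proof -
  have count: "(q + 1) * (2 * card (G_edges H) + T) = (q ^ 4 - 1) * q\<^sup>2"
    using card_H_mult_twice_card_G_edges assms by (simp add: add_mult_distrib2 flip: power_mult)
  have "int (q ^ 4 - 1) = int q ^ 4 - 1"
    using two_le_of_card_eq_square[OF assms(1)] by (simp add: of_nat_diff)
  then have "(int q + 1) * (2 * int (card (G_edges H)) + int T) = (int q ^ 4 - 1) * int q ^ 2"
    using arg_cong[OF count, of int] by (simp only: of_nat_mult of_nat_add of_nat_power of_nat_1 of_nat_numeral)
  also have "int q ^ 4 - 1 = (int q + 1) * ((int q - 1) * (int q ^ 2 + 1))"
    by (simp add: algebra_simps eval_nat_numeral)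
  finally have "(int q + 1) * (2 * int (card (G_edges H)) + int T)
      = (int q + 1) * ((int q - 1) * (int q ^ 2 + 1) * int q ^ 2)"
    by (simp only: mult.assoc)
  then show ?thesis by simp
qed

end

theorem theorem4:
  fixes q :: nat and H :: "'a::{finite,field} set"
  assumes q_pp: "\<exists>p k. prime p \<and> k \<ge> 1 \<and> q = p ^ k"
    and card_F: "CARD('a) = q ^ 2"
    and H_sub: "H \<subseteq> UNIV - {0}"
    and H_one: "1 \<in> H"
    and H_mult: "\<And>x y. x \<in> H \<Longrightarrow> y \<in> H \<Longrightarrow> x * y \<in> H"
    and H_inv: "\<And>x. x \<in> H \<Longrightarrow> inverse x \<in> H"
    and H_card: "card H = q + 1"
  shows "(odd q \<longrightarrow> 2 * int (card (G_edges H)) = int q ^ 5 - int q ^ 4 + int q ^ 3 - 2 * int q ^ 2 + 1)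
       \<and> (\<forall>k. q = 2 ^ k \<longrightarrow> 2 * int (card (G_edges H)) = int q ^ 5 - int q ^ 4 + int q ^ 3 - 2 * int q ^ 2)"
proof -
  interpret multiplicative_subgroup H
    using H_sub H_one H_mult H_inv by unfold_locales auto
  have "q \<ge> 2"
    using two_le_of_card_eq_square[OF card_F] .
  show ?thesis
  proof (intro conjI impI allI)
    assume "odd q"
    then have two: "(2::'a) \<noteq> 0"
      using two_eq_zero_iff_even_card card_F by auto
    obtain m where "q = 2 * m + 1" using \<open>odd q\<close> oddE by blast
    then have "4 dvd CARD('a) - 1"
      using card_F by (simp add: power2_eq_square algebra_simps)
    then obtain i :: 'a where "i\<^sup>2 = - 1"
      using exists_sqrt_minus_one[OF two] by blast
    then have "2 * int (card (G_edges H)) = (int q - 1) * (int q ^ 2 + 1) * int q ^ 2 - int (q ^ 2 - 1)"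
      using twice_card_G_edges_eq[OF card_F H_card] card_sum_two_squares[OF two] card_F in_H_nonzero
      by metis
    then show "2 * int (card (G_edges H)) = int q ^ 5 - int q ^ 4 + int q ^ 3 - 2 * int q ^ 2 + 1"
      using \<open>q \<ge> 2\<close> by (simp add: of_nat_diff algebra_simps eval_nat_numeral)
  next
    fix k assume "q = 2 ^ k"
    then have "even q"
      using \<open>q \<ge> 2\<close> by (cases k) auto
    then have "(2::'a) = 0"
      using two_eq_zero_iff_even_card card_F by auto
    then have "2 * int (card (G_edges H)) = (int q - 1) * (int q ^ 2 + 1) * int q ^ 2 - int (q ^ 2)"
      using twice_card_G_edges_eq[OF card_F H_card] card_sum_two_squares_char_two card_F by metis
    then show "2 * int (card (G_edges H)) = int q ^ 5 - int q ^ 4 + int q ^ 3 - 2 * int q ^ 2"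
      by (simp add: algebra_simps eval_nat_numeral)
  qed
qed

end
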